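(* Let $T=((\Omega,\mathcal{A}),\{(\Omega,\mathcal{M}_i)\}_{i\in N},\{t_i\}_{i\in N})$ be a type space. Then exactly one of the following holds: (a) the players' beliefs in $T$ are universally consistent; (b) $T$ admits a universal money pump.
   Context: A field on a set $X$ is a collection of subsets of $X$ containing $X$ and closed under complements and finite intersections. For a field $\mathcal{A}$ on $\Omega$, $\mathrm{pba}(\Omega,\mathcal{A})$ is the set of finitely additive nonnegative $P:\mathcal{A}\to\mathbb{R}$ with $P(\Omega)=1$; $B(\Omega,\mathcal{A})$ is the sup-norm closure of the linear span of indicators of sets in $\mathcal{A}$. $\mathrm{ba}(\Omega,\mathcal{A})$ carries the weak* topology (weakest making $\mu\mapsto\int f\,d\mu$ continuous for all $f\in B(\Omega,\mathcal{A})$); $\overline{\,\cdot\,}^\ast$ denotes weak* closure. A type space is $T=((\Omega,\mathcal{A}),\{(\Omega,\mathcal{M}_i)\}_{i\in N},\{t_i\}_{i\in N})$ with $N$ a nonempty set of players, fields $\mathcal{M}_i\subseteq\mathcal{A}$ on a set $\Omega$, and $t_i:\Omega\times\mathcal{A}\to[0,1]$ with: $t_i(\omega,\cdot)\in\mathrm{pba}(\Omega,\mathcal{A})$; $t_i(\cdot,E)\in B(\Omega,\mathcal{M}_i)$ for all $E\in\mathcal{A}$; $t_i(\omega,E)=1$ whenever $E\in\mathcal{M}_i$, $\omega\in E$. Let $\Pi_i=\overline{\mathrm{conv}\{t_i(\omega,\cdot):\omega\in\Omega\}}^\ast$ (equivalently the $P\in\mathrm{pba}(\Omega,\mathcal{A})$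 with $P(E\cap F)=\int_F t_i(\cdot,E)\,dP$ for all $E\in\mathcal{A},F\in\mathcal{M}_i$). For $I\subseteq N$, a nonempty $S\subseteq\Omega$ is an $I$-common certainty component if there is $E\in\mathcal{A}$ with $E\subseteq S$ and $t_i(\omega,E)=1$ for all $\omega\in S$, $i\in I$. A set $E$ is $I$-commonly certain at $\omega$ if there is an $I$-common certainty component $S$ with $\omega\in S\subseteq E$. Universal consistency: for every finite $I\subseteq N$ and every $I$-common certainty component $S$ there is $P\in\bigcap_{i\in I}\Pi_i$ with $\inf\{P(E):E\in\mathcal{A},S\subseteq E\}>0$. A semi-bet is a family $(f_i)_{i\in I}\subseteq B(\Omega,\mathcal{A})$, $I\subseteq N$ finite, such that for every $\omega\in\Omega$ the set $\{\omega':\int f_i\,dt_i(\omega',\cdot)\ge0\ \forall i\in I\}$ is $I$-commonly certain at $\omega$. $T$ admits a universal money pump if there exist a finite $I\subseteq N$ and an $I$-common certainty component $S$ such that for every $P\in\mathrm{pba}(\Omega,\mathcal{A})$ with $\inf\{P(E):E\in\mathcal{A},S\subseteq E\}>0$ there is a semi-bet $(f_i)_{i\in I}$ with $\int\sum_{i\in I}f_i\,dP<0$. *)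

theory Defs
  imports Complex_Main "HOL-Library.Indicator_Function"
begin

text \<open>The state space Omega is the universe of the type 'w.
  Players have type 'i; the set of players is N.\<close>

definition field_on :: "'w set set \<Rightarrow> bool" where
  "field_on A \<longleftrightarrow> UNIV \<in> A \<and> (\<forall>E\<in>A. - E \<in> A) \<and> (\<forall>E\<in>A. \<forall>F\<in>A. E \<inter> F \<in> A)"

definition pba :: "'w set set \<Rightarrow> ('w set \<Rightarrow> real) \<Rightarrow> bool" where
  "pba A P \<longleftrightarrow> (\<forall>E\<in>A. P E \<ge> 0) \<and>
     (\<forall>E\<in>A. \<forall>F\<in>A. E \<inter> F = {} \<longrightarrow> P (E \<union> F) = P E + P F) \<and> P UNIV = 1"

text \<open>Elements of ba(Omega,A): bounded finitely additive set functions on A,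
  represented extensionally (value 0 outside A).\<close>
definition ba :: "'w set set \<Rightarrow> ('w set \<Rightarrow> real) \<Rightarrow> bool" where
  "ba A \<mu> \<longleftrightarrow> (\<forall>E\<in>A. \<forall>F\<in>A. E \<inter> F = {} \<longrightarrow> \<mu> (E \<union> F) = \<mu> E + \<mu> F) \<and>
     (\<exists>C. \<forall>E\<in>A. \<bar>\<mu> E\<bar> \<le> C) \<and> (\<forall>E. E \<notin> A \<longrightarrow> \<mu> E = 0)"

definition ext_on :: "'w set set \<Rightarrow> ('w set \<Rightarrow> real) \<Rightarrow> 'w set \<Rightarrow> real" where
  "ext_on A P = (\<lambda>E. if E \<in> A then P E else 0)"

definition simple_fun :: "'w set set \<Rightarrow> ('w \<Rightarrow> real) \<Rightarrow> bool" where
  "simple_fun A s \<longleftrightarrow> (\<exists>(n::nat) c E. (\<forall>k<n. E k \<in> A) \<and>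
      s = (\<lambda>\<omega>. \<Sum>k<n. c k * indicator (E k) \<omega>))"

definition Bfun :: "'w set set \<Rightarrow> ('w \<Rightarrow> real) set" where
  "Bfun A = {f. \<forall>\<epsilon>>0. \<exists>s. simple_fun A s \<and> (\<forall>\<omega>. \<bar>f \<omega> - s \<omega>\<bar> \<le> \<epsilon>)}"

definition simple_integral_ba :: "('w set \<Rightarrow> real) \<Rightarrow> ('w \<Rightarrow> real) \<Rightarrow> real" where
  "simple_integral_ba \<mu> s = (\<Sum>y\<in>range s. y * \<mu> (s -` {y}))"

definition integral_ba :: "'w set set \<Rightarrow> ('w set \<Rightarrow> real) \<Rightarrow> ('w \<Rightarrow> real) \<Rightarrow> real" where
  "integral_ba A \<mu> f = (THE r. \<forall>\<epsilon>>0. \<exists>\<delta>>0. \<forall>s. simple_fun A s \<and> (\<forall>\<omega>. \<bar>f \<omega> - s \<omega>\<bar> \<le> \<delta>)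
        \<longrightarrow> \<bar>simple_integral_ba \<mu> s - r\<bar> < \<epsilon>)"

text \<open>Weak* closure in ba(Omega,A) (closure w.r.t. the weakest topology making
  mu |-> integral of f continuous for all f in B(Omega,A)), via basic neighbourhoods.\<close>
definition wstar_closure :: "'w set set \<Rightarrow> ('w set \<Rightarrow> real) set \<Rightarrow> ('w set \<Rightarrow> real) set" where
  "wstar_closure A X = {\<mu>. ba A \<mu> \<and>
     (\<forall>G. finite G \<longrightarrow> G \<subseteq> Bfun A \<longrightarrow> (\<forall>\<epsilon>>0. \<exists>\<nu>\<in>X. \<forall>f\<in>G.
        \<bar>integral_ba A \<mu> f - integral_ba A \<nu> f\<bar> < \<epsilon>))}"

definition conv_hull :: "('w set \<Rightarrow> real) set \<Rightarrow> ('w set \<Rightarrow> real) set" where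
  "conv_hull X = {\<lambda>E. \<Sum>k<n. l k * Q k E | (n::nat) l Q.
       n \<ge> 1 \<and> (\<forall>k<n. l k \<ge> 0 \<and> Q k \<in> X) \<and> (\<Sum>k<n. l k) = 1}"

definition type_space ::
  "'i set \<Rightarrow> 'w set set \<Rightarrow> ('i \<Rightarrow> 'w set set) \<Rightarrow> ('i \<Rightarrow> 'w \<Rightarrow> 'w set \<Rightarrow> real) \<Rightarrow> bool" where
  "type_space N A M t \<longleftrightarrow> N \<noteq> {} \<and> field_on A \<and>
     (\<forall>i\<in>N. field_on (M i) \<and> M i \<subseteq> A \<and>
        (\<forall>\<omega>. pba A (t i \<omega>) \<and> (\<forall>E\<in>A. t i \<omega> E \<in> {0..1})) \<and>
        (\<forall>E\<in>A. (\<lambda>\<omega>. t i \<omega> E) \<in> Bfun (M i)) \<and>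
        (\<forall>E\<in>M i. \<forall>\<omega>\<in>E. t i \<omega> E = 1))"

definition Pi_set :: "'w set set \<Rightarrow> ('i \<Rightarrow> 'w \<Rightarrow> 'w set \<Rightarrow> real) \<Rightarrow> 'i \<Rightarrow> ('w set \<Rightarrow> real) set" where
  "Pi_set A t i = wstar_closure A (conv_hull {ext_on A (t i \<omega>) | \<omega>. True})"

definition cc_component ::
  "'w set set \<Rightarrow> ('i \<Rightarrow> 'w \<Rightarrow> 'w set \<Rightarrow> real) \<Rightarrow> 'i set \<Rightarrow> 'w set \<Rightarrow> bool" where
  "cc_component A t I S \<longleftrightarrow> S \<noteq> {} \<and> (\<exists>E\<in>A. E \<subseteq> S \<and> (\<forall>\<omega>\<in>S. \<forall>i\<in>I. t i \<omega> E = 1))"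

definition commonly_certain ::
  "'w set set \<Rightarrow> ('i \<Rightarrow> 'w \<Rightarrow> 'w set \<Rightarrow> real) \<Rightarrow> 'i set \<Rightarrow> 'w set \<Rightarrow> 'w \<Rightarrow> bool" where
  "commonly_certain A t I E \<omega> \<longleftrightarrow> (\<exists>S. cc_component A t I S \<and> \<omega> \<in> S \<and> S \<subseteq> E)"

definition outer_inf :: "('w set \<Rightarrow> real) \<Rightarrow> 'w set set \<Rightarrow> 'w set \<Rightarrow> real" where
  "outer_inf P A S = Inf {P E | E. E \<in> A \<and> S \<subseteq> E}"

definition universally_consistent ::
  "'i set \<Rightarrow> 'w set set \<Rightarrow> ('i \<Rightarrow> 'w set set) \<Rightarrow> ('i \<Rightarrow> 'w \<Rightarrow> 'w set \<Rightarrow> real) \<Rightarrow> bool" where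
  "universally_consistent N A M t \<longleftrightarrow>
     (\<forall>I S. finite I \<longrightarrow> I \<subseteq> N \<longrightarrow> cc_component A t I S \<longrightarrow>
        (\<exists>P. pba A P \<and> (\<forall>i\<in>I. P \<in> Pi_set A t i) \<and> outer_inf P A S > 0))"

definition semi_bet ::
  "'w set set \<Rightarrow> ('i \<Rightarrow> 'w \<Rightarrow> 'w set \<Rightarrow> real) \<Rightarrow> 'i set \<Rightarrow> ('i \<Rightarrow> 'w \<Rightarrow> real) \<Rightarrow> bool" where
  "semi_bet A t I f \<longleftrightarrow> finite I \<and> (\<forall>i\<in>I. f i \<in> Bfun A) \<and>
     (\<forall>\<omega>. commonly_certain A t I {\<omega>'. \<forall>i\<in>I. integral_ba A (t i \<omega>') (f i) \<ge> 0} \<omega>)"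

definition universal_money_pump ::
  "'i set \<Rightarrow> 'w set set \<Rightarrow> ('i \<Rightarrow> 'w set set) \<Rightarrow> ('i \<Rightarrow> 'w \<Rightarrow> 'w set \<Rightarrow> real) \<Rightarrow> bool" where
  "universal_money_pump N A M t \<longleftrightarrow>
     (\<exists>I S. finite I \<and> I \<subseteq> N \<and> cc_component A t I S \<and>
        (\<forall>P. pba A P \<and> outer_inf P A S > 0 \<longrightarrow>
           (\<exists>f. semi_bet A t I f \<and> integral_ba A P (\<lambda>\<omega>. \<Sum>i\<in>I. f i \<omega>) < 0)))"

end

theory Submission
  imports Defs
begin

text \<open>Both directions rest on a duality between Pi_i and bets. As Pi_i is the weak* closed convex
  hull of player i's types, a function whose expectation under t_i(w, -) is nonnegative in every
  state w has nonnegative expectation under every P in Pi_i. Summing over the players of a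
  semi-bet shows that a prior in the intersection of the Pi_i cannot be money-pumped, so (a)
  excludes (b). Conversely, if (a) fails for I and S, every P giving S positive outer mass lies
  outside some Pi_i. Weak* neighbourhoods are described by finitely many integrals, so separating
  P from Pi_i in finitely many coordinates yields a bet for player i alone that i accepts in every
  state but that has negative P-expectation. As the whole state space is I-commonly certain,
  this single bet is a semi-bet, and (b) holds.\<close>

section \<open>Fields and finitely additive set functions\<close>

lemma field_on_UNIV: "field_on A \<Longrightarrow> UNIV \<in> A"
  and field_on_Compl: "field_on A \<Longrightarrow> E \<in> A \<Longrightarrow> - E \<in> A"
  and field_on_Int: "field_on A \<Longrightarrow> E \<in> A \<Longrightarrow> F \<in> A \<Longrightarrow> E \<inter> F \<in> A"
  by (simp_all add: field_on_def)

lemma field_on_empty: "field_on A \<Longrightarrow> {} \<in> A"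
  using field_on_Compl[OF _ field_on_UNIV] by fastforce

lemma field_on_Un:
  assumes "field_on A" "E \<in> A" "F \<in> A"
  shows "E \<union> F \<in> A"
proof -
  have "- (- E \<inter> - F) \<in> A"
    using assms by (intro field_on_Compl field_on_Int) auto
  then show ?thesis by simp
qed

lemma field_on_finite_UN:
  assumes "field_on A" "finite P" "\<forall>p\<in>P. H p \<in> A"
  shows "(\<Union>p\<in>P. H p) \<in> A"
  using assms(2,3) by induction (auto simp: field_on_empty field_on_Un assms(1))

lemma type_space_field_on: "type_space N A M t \<Longrightarrow> field_on A"
  and type_space_pba: "type_space N A M t \<Longrightarrow> i \<in> N \<Longrightarrow> pba A (t i \<omega>)"
  unfolding type_space_def by auto

definition nonneg_additive :: "'w set set \<Rightarrow> ('w set \<Rightarrow> real) \<Rightarrow> bool" where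
  "nonneg_additive A \<mu> \<longleftrightarrow> (\<forall>E\<in>A. \<mu> E \<ge> 0) \<and>
     (\<forall>E\<in>A. \<forall>F\<in>A. E \<inter> F = {} \<longrightarrow> \<mu> (E \<union> F) = \<mu> E + \<mu> F)"

lemma pba_iff_nonneg_additive: "pba A P \<longleftrightarrow> nonneg_additive A P \<and> P UNIV = 1"
  unfolding pba_def nonneg_additive_def by auto

lemma pba_imp_nonneg_additive: "pba A P \<Longrightarrow> nonneg_additive A P"
  by (simp add: pba_iff_nonneg_additive)

lemma nonneg_additive_empty: "nonneg_additive A \<mu> \<Longrightarrow> field_on A \<Longrightarrow> \<mu> {} = 0"
  unfolding nonneg_additive_def using field_on_empty[of A] by force

lemma nonneg_additive_finite_UN:
  assumes \<mu>: "nonneg_additive A \<mu>" and A: "field_on A" and "finite P" "\<forall>p\<in>P. H p \<in> A"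
    and "disjoint_family_on H P"
  shows "\<mu> (\<Union>p\<in>P. H p) = (\<Sum>p\<in>P. \<mu> (H p))"
  using assms(3-5)
proof induction
  case empty
  then show ?case using nonneg_additive_empty[OF \<mu> A] by simp
next
  case (insert x P)
  have "H x \<inter> (\<Union>p\<in>P. H p) = {}"
    using insert.hyps(2) insert.prems(2) by (fastforce simp: disjoint_family_on_def)
  moreover have "(\<Union>p\<in>P. H p) \<in> A"
    using field_on_finite_UN[OF A insert.hyps(1)] insert.prems(1) by simp
  ultimately have "\<mu> (\<Union>p\<in>insert x P. H p) = \<mu> (H x) + \<mu> (\<Union>p\<in>P. H p)"
    using \<mu> insert.prems(1) unfolding nonneg_additive_def by simp
  with insert show ?case
    using disjoint_family_on_mono[OF subset_insertI insert.prems(2)] by simp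
qed

lemma nonneg_additive_le_UNIV:
  assumes "nonneg_additive A \<mu>" "field_on A" "E \<in> A"
  shows "\<mu> E \<le> \<mu> UNIV"
proof -
  have "E \<inter> - E = {}" by blast
  then have "\<mu> (E \<union> - E) = \<mu> E + \<mu> (- E)" "\<mu> (- E) \<ge> 0"
    using assms field_on_Compl[OF assms(2,3)] unfolding nonneg_additive_def by blast+
  then show ?thesis by simp
qed

lemma nonneg_additive_sum:
  assumes "\<forall>k<n. nonneg_additive A (Q k) \<and> l k \<ge> 0"
  shows "nonneg_additive A (\<lambda>E. \<Sum>k<(n::nat). l k * Q k E)"
  using assms unfolding nonneg_additive_def
  by (auto simp: sum.distrib[symmetric] distrib_left intro!: sum.cong sum_nonneg)

lemma nonneg_additive_ext_on:
  "field_on A \<Longrightarrow> nonneg_additive A \<mu> \<Longrightarrow> nonneg_additive A (ext_on A \<mu>)"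
  unfolding nonneg_additive_def ext_on_def by (auto simp: field_on_Un)

lemma pba_ext_on: "field_on A \<Longrightarrow> pba A P \<Longrightarrow> pba A (ext_on A P)"
  unfolding pba_def ext_on_def by (auto simp: field_on_Un field_on_UNIV)

lemma ba_ext_on:
  assumes A: "field_on A" and P: "pba A P"
  shows "ba A (ext_on A P)"
proof -
  have "\<bar>ext_on A P E\<bar> \<le> 1" if "E \<in> A" for E
    using P nonneg_additive_le_UNIV[OF pba_imp_nonneg_additive[OF P] A that] that
    by (auto simp: pba_def ext_on_def)
  moreover have "ext_on A P (E \<union> F) = ext_on A P E + ext_on A P F"
    if "E \<in> A" "F \<in> A" "E \<inter> F = {}" for E F
    using P that A by (simp add: pba_def ext_on_def field_on_Un)
  ultimately show ?thesis
    unfolding ba_def by (auto simp: ext_on_def)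
qed

lemma outer_inf_ext_on: "outer_inf (ext_on A P) A S = outer_inf P A S"
proof -
  have "{ext_on A P E | E. E \<in> A \<and> S \<subseteq> E} = {P E | E. E \<in> A \<and> S \<subseteq> E}"
    unfolding ext_on_def by auto
  then show ?thesis unfolding outer_inf_def by simp
qed

section \<open>Simple functions and their integrals\<close>

lemma simple_fun_sum_indicator_levels:
  fixes c :: "nat \<Rightarrow> real"
  assumes A: "field_on A" and E: "\<forall>k<n. E k \<in> A"
  shows "finite (range (\<lambda>\<omega>. \<Sum>k<n. c k * indicator (E k) \<omega>)) \<and>
    (\<forall>y. (\<lambda>\<omega>. \<Sum>k<n. c k * indicator (E k) \<omega>) -` {y} \<in> A)"
  using E
proof (induction n)
  case 0
  have "(\<lambda>\<omega>. 0::real) -` {y} \<in> A" for y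
    using field_on_UNIV[OF A] field_on_empty[OF A] by (cases "y = 0") auto
  then show ?case by (simp add: image_def)
next
  case (Suc n)
  define s where "s = (\<lambda>\<omega>. \<Sum>k<n. c k * indicator (E k) \<omega> :: real)"
  have IH: "finite (range s)" "\<forall>y. s -` {y} \<in> A" and En: "E n \<in> A"
    using Suc unfolding s_def by auto
  have "range (\<lambda>\<omega>. s \<omega> + c n * indicator (E n) \<omega>) \<subseteq> (\<lambda>(x, y). x + y) ` (range s \<times> {0, c n})"
    by (auto simp: indicator_def image_iff)
  then have "finite (range (\<lambda>\<omega>. s \<omega> + c n * indicator (E n) \<omega>))"
    using IH(1) by (meson finite.emptyI finite.insertI finite_SigmaI finite_imageI finite_subset)
  moreover have "(\<lambda>\<omega>. s \<omega> + c n * indicator (E n) \<omega>) -` {y} \<in> A" for y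
  proof -
    have "(\<lambda>\<omega>. s \<omega> + c n * indicator (E n) \<omega>) -` {y} = (s -` {y - c n} \<inter> E n) \<union> (s -` {y} \<inter> - E n)"
      by (auto simp: indicator_def)
    then show ?thesis using IH(2) En A by (simp add: field_on_Un field_on_Int field_on_Compl)
  qed
  ultimately show ?case by (simp add: s_def)
qed

lemma simple_fun_finite_range: "field_on A \<Longrightarrow> simple_fun A s \<Longrightarrow> finite (range s)"
  and simple_fun_vimage: "field_on A \<Longrightarrow> simple_fun A s \<Longrightarrow> s -` {y} \<in> A"
  unfolding simple_fun_def using simple_fun_sum_indicator_levels by blast+

lemma sum_lessThan_add: "(\<Sum>k<n + (m::nat). g k) = (\<Sum>k<n. g k) + (\<Sum>k<m. g (n + k))"
  by (induction m) (auto simp: add.assoc)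

lemma simple_fun_lin:
  fixes s s' :: "'w \<Rightarrow> real"
  assumes "simple_fun A s" "simple_fun A s'"
  shows "simple_fun A (\<lambda>\<omega>. a * s \<omega> + b * s' \<omega>)"
proof -
  obtain n :: nat and c E where s: "\<forall>k<n. E k \<in> A" "s = (\<lambda>\<omega>. \<Sum>k<n. c k * indicator (E k) \<omega>)"
    using assms(1) unfolding simple_fun_def by blast
  obtain m :: nat and d F where s': "\<forall>k<m. F k \<in> A" "s' = (\<lambda>\<omega>. \<Sum>k<m. d k * indicator (F k) \<omega>)"
    using assms(2) unfolding simple_fun_def by blast
  define c' where "c' = (\<lambda>k. if k < n then a * c k else b * d (k - n))"
  define E' where "E' = (\<lambda>k. if k < n then E k else F (k - n))"
  have "\<forall>k<n + m. E' k \<in> A" using s s' unfolding E'_def by auto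
  moreover have "a * s \<omega> + b * s' \<omega> = (\<Sum>k<n + m. c' k * indicator (E' k) \<omega>)" for \<omega>
    unfolding sum_lessThan_add s s' c'_def E'_def by (simp add: sum_distrib_left mult.assoc)
  ultimately show ?thesis unfolding simple_fun_def by blast
qed

lemma simple_fun_const: "field_on A \<Longrightarrow> simple_fun A (\<lambda>\<omega>. c)"
  unfolding simple_fun_def
  by (rule exI[of _ 1], rule exI[of _ "\<lambda>_. c"], rule exI[of _ "\<lambda>_. UNIV"]) (simp add: field_on_UNIV)

lemma simple_integral_partition:
  assumes A: "field_on A" and \<mu>: "nonneg_additive A \<mu>" and s: "simple_fun A s"
    and "finite P" and F: "\<forall>p\<in>P. F p \<in> A" and disj: "disjoint_family_on F P"
    and cover: "(\<Union>p\<in>P. F p) = UNIV" and val: "\<forall>p\<in>P. \<forall>\<omega>\<in>F p. s \<omega> = v p"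
  shows "simple_integral_ba \<mu> s = (\<Sum>p\<in>P. v p * \<mu> (F p))"
proof -
  have levels: "s -` {y} \<in> A" for y
    using simple_fun_vimage[OF A s] .
  have split: "\<mu> (s -` {y}) = (\<Sum>p\<in>P. \<mu> (s -` {y} \<inter> F p))" for y
  proof -
    have "\<mu> (\<Union>p\<in>P. s -` {y} \<inter> F p) = (\<Sum>p\<in>P. \<mu> (s -` {y} \<inter> F p))"
      using disj levels F field_on_Int[OF A] \<open>finite P\<close>
      by (intro nonneg_additive_finite_UN[OF \<mu> A]) (auto simp: disjoint_family_on_def)
    then show ?thesis using cover by (metis Int_UN_distrib inf_top.right_neutral)
  qed
  have cell: "(\<Sum>y\<in>range s. y * \<mu> (s -` {y} \<inter> F p)) = v p * \<mu> (F p)" if "p \<in> P" for p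
  proof (cases "F p = {}")
    case True
    then show ?thesis using nonneg_additive_empty[OF \<mu> A] by simp
  next
    case False
    then have "v p \<in> range s" using val \<open>p \<in> P\<close> by (metis ex_in_conv rangeI)
    moreover have "s -` {y} \<inter> F p = (if y = v p then F p else {})" for y
      using val \<open>p \<in> P\<close> by auto
    ultimately show ?thesis
      using simple_fun_finite_range[OF A s] nonneg_additive_empty[OF \<mu> A]
      by (simp add: if_distrib[of \<mu>] if_distrib[of "(*) _"] sum.delta cong: if_cong)
  qed
  have "simple_integral_ba \<mu> s = (\<Sum>p\<in>P. \<Sum>y\<in>range s. y * \<mu> (s -` {y} \<inter> F p))"
    unfolding simple_integral_ba_def split by (simp add: sum_distrib_left sum.swap[of _ P])
  also have "\<dots> = (\<Sum>p\<in>P. v p * \<mu> (F p))"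
    using cell by simp
  finally show ?thesis .
qed

lemma simple_integral_lin:
  assumes A: "field_on A" and \<mu>: "nonneg_additive A \<mu>" and s: "simple_fun A s" and s': "simple_fun A s'"
  shows "simple_integral_ba \<mu> (\<lambda>\<omega>. a * s \<omega> + b * s' \<omega>) =
    a * simple_integral_ba \<mu> s + b * simple_integral_ba \<mu> s'"
proof -
  define P where "P = range s \<times> range s'"
  define F where "F = (\<lambda>(y, y'). s -` {y} \<inter> s' -` {y'})"
  have partition: "finite P" "\<forall>p\<in>P. F p \<in> A" "disjoint_family_on F P" "(\<Union>p\<in>P. F p) = UNIV"
    unfolding P_def F_def disjoint_family_on_def
    using simple_fun_finite_range[OF A] simple_fun_vimage[OF A] field_on_Int[OF A] s s' by auto
  note integral = simple_integral_partition[OF A \<mu> _ partition]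
  have "simple_integral_ba \<mu> s = (\<Sum>p\<in>P. fst p * \<mu> (F p))"
    by (rule integral[OF s]) (auto simp: F_def)
  moreover have "simple_integral_ba \<mu> s' = (\<Sum>p\<in>P. snd p * \<mu> (F p))"
    by (rule integral[OF s']) (auto simp: F_def)
  moreover have "simple_integral_ba \<mu> (\<lambda>\<omega>. a * s \<omega> + b * s' \<omega>) =
      (\<Sum>p\<in>P. (a * fst p + b * snd p) * \<mu> (F p))"
    by (rule integral[OF simple_fun_lin[OF s s']]) (auto simp: F_def)
  ultimately show ?thesis
    by (simp add: sum_distrib_left sum.distrib algebra_simps)
qed

lemma simple_integral_const: "simple_integral_ba \<mu> (\<lambda>\<omega>. c) = c * \<mu> UNIV"
proof -
  have "range (\<lambda>\<omega>. c) = {c}" "(\<lambda>\<omega>. c) -` {c} = UNIV" by auto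
  then show ?thesis unfolding simple_integral_ba_def by simp
qed

lemma simple_integral_abs_le:
  assumes A: "field_on A" and \<mu>: "nonneg_additive A \<mu>" and s: "simple_fun A s"
    and bound: "\<forall>\<omega>. \<bar>s \<omega>\<bar> \<le> M"
  shows "\<bar>simple_integral_ba \<mu> s\<bar> \<le> M * \<mu> UNIV"
proof -
  have fin: "finite (range s)" and levels: "\<And>y. s -` {y} \<in> A"
    using simple_fun_finite_range[OF A s] simple_fun_vimage[OF A s] by auto
  have "(\<Union>y\<in>range s. s -` {y}) = UNIV" by blast
  then have "\<mu> UNIV = \<mu> (\<Union>y\<in>range s. s -` {y})" by (simp only:)
  also have "\<dots> = (\<Sum>y\<in>range s. \<mu> (s -` {y}))"
    using levels by (intro nonneg_additive_finite_UN[OF \<mu> A fin]) (auto simp: disjoint_family_on_def)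
  finally have total: "\<mu> UNIV = (\<Sum>y\<in>range s. \<mu> (s -` {y}))" .
  have level_nonneg: "\<mu> (s -` {y}) \<ge> 0" for y
    using \<mu> levels by (simp add: nonneg_additive_def)
  have "\<bar>simple_integral_ba \<mu> s\<bar> \<le> (\<Sum>y\<in>range s. \<bar>y * \<mu> (s -` {y})\<bar>)"
    unfolding simple_integral_ba_def by (rule sum_abs)
  also have "\<dots> = (\<Sum>y\<in>range s. \<bar>y\<bar> * \<mu> (s -` {y}))"
    using level_nonneg by (simp add: abs_mult)
  also have "\<dots> \<le> (\<Sum>y\<in>range s. M * \<mu> (s -` {y}))"
    using bound level_nonneg by (intro sum_mono mult_right_mono) auto
  finally show ?thesis by (simp add: total sum_distrib_left)
qed

lemma simple_integral_measure_sum: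
  "simple_integral_ba (\<lambda>E. \<Sum>k<n. l k * Q k E) s = (\<Sum>k<(n::nat). l k * simple_integral_ba (Q k) s)"
  unfolding simple_integral_ba_def
  by (simp add: sum_distrib_left sum.swap[of _ "range s"] mult.left_commute)

lemma simple_integral_ext_on:
  "field_on A \<Longrightarrow> simple_fun A s \<Longrightarrow> simple_integral_ba (ext_on A \<mu>) s = simple_integral_ba \<mu> s"
  unfolding simple_integral_ba_def ext_on_def by (simp add: simple_fun_vimage)

section \<open>The integral on B(Omega, A)\<close>

definition simple_approx :: "'w set set \<Rightarrow> ('w \<Rightarrow> real) \<Rightarrow> real \<Rightarrow> ('w \<Rightarrow> real) \<Rightarrow> bool" where
  "simple_approx A f \<delta> s \<longleftrightarrow> simple_fun A s \<and> (\<forall>\<omega>. \<bar>f \<omega> - s \<omega>\<bar> \<le> \<delta>)"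

lemma Bfun_iff_simple_approx: "f \<in> Bfun A \<longleftrightarrow> (\<forall>\<delta>>0. \<exists>s. simple_approx A f \<delta> s)"
  unfolding Bfun_def simple_approx_def by simp

lemma integral_ba_iff_simple_approx:
  "integral_ba A \<mu> f = (THE r. \<forall>\<epsilon>>0. \<exists>\<delta>>0. \<forall>s. simple_approx A f \<delta> s \<longrightarrow>
     \<bar>simple_integral_ba \<mu> s - r\<bar> < \<epsilon>)"
  unfolding integral_ba_def simple_approx_def ..

lemma simple_approx_lin:
  assumes "simple_approx A f \<delta> s" "simple_approx A g \<delta>' s'"
  shows "simple_approx A (\<lambda>\<omega>. a * f \<omega> + b * g \<omega>) (\<bar>a\<bar> * \<delta> + \<bar>b\<bar> * \<delta>') (\<lambda>\<omega>. a * s \<omega> + b * s' \<omega>)"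
  unfolding simple_approx_def
proof (intro conjI allI)
  show "simple_fun A (\<lambda>\<omega>. a * s \<omega> + b * s' \<omega>)"
    using assms simple_fun_lin unfolding simple_approx_def by blast
  fix \<omega>
  have "\<bar>a * f \<omega> + b * g \<omega> - (a * s \<omega> + b * s' \<omega>)\<bar> = \<bar>a * (f \<omega> - s \<omega>) + b * (g \<omega> - s' \<omega>)\<bar>"
    by (simp add: algebra_simps)
  also have "\<dots> \<le> \<bar>a\<bar> * \<bar>f \<omega> - s \<omega>\<bar> + \<bar>b\<bar> * \<bar>g \<omega> - s' \<omega>\<bar>"
    using abs_triangle_ineq[of "a * (f \<omega> - s \<omega>)" "b * (g \<omega> - s' \<omega>)"] by (simp add: abs_mult)
  also have "\<dots> \<le> \<bar>a\<bar> * \<delta> + \<bar>b\<bar> * \<delta>'"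
    using assms unfolding simple_approx_def by (intro add_mono mult_left_mono) auto
  finally show "\<bar>a * f \<omega> + b * g \<omega> - (a * s \<omega> + b * s' \<omega>)\<bar> \<le> \<bar>a\<bar> * \<delta> + \<bar>b\<bar> * \<delta>'" .
qed

lemma simple_approx_mono: "simple_approx A f \<delta> s \<Longrightarrow> \<delta> \<le> \<delta>' \<Longrightarrow> simple_approx A f \<delta>' s"
  unfolding simple_approx_def by (meson order_trans)

lemma Bfun_simple: "simple_fun A s \<Longrightarrow> s \<in> Bfun A"
  unfolding Bfun_iff_simple_approx simple_approx_def by force

lemma Bfun_const: "field_on A \<Longrightarrow> (\<lambda>\<omega>. c) \<in> Bfun A"
  by (rule Bfun_simple[OF simple_fun_const])

lemma ex_lin_tolerance:
  fixes a b \<epsilon> :: real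
  assumes "\<epsilon> > 0"
  shows "\<exists>\<delta>>0. \<bar>a\<bar> * \<delta> + \<bar>b\<bar> * \<delta> \<le> \<epsilon>"
proof (intro exI conjI)
  define \<delta> where "\<delta> = \<epsilon> / (\<bar>a\<bar> + \<bar>b\<bar> + 1)"
  show "\<delta> > 0"
    using assms by (simp add: \<delta>_def add_nonneg_pos)
  then have "\<bar>a\<bar> * \<delta> + \<bar>b\<bar> * \<delta> \<le> (\<bar>a\<bar> + \<bar>b\<bar> + 1) * \<delta>"
    by (simp add: algebra_simps)
  also have "\<dots> = \<epsilon>"
    by (simp add: \<delta>_def add_nonneg_pos)
  finally show "\<bar>a\<bar> * \<delta> + \<bar>b\<bar> * \<delta> \<le> \<epsilon>" .
qed

lemma Bfun_lin:
  assumes "f \<in> Bfun A" "g \<in> Bfun A"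
  shows "(\<lambda>\<omega>. a * f \<omega> + b * g \<omega>) \<in> Bfun A"
  unfolding Bfun_iff_simple_approx
proof (intro allI impI)
  fix \<epsilon> :: real assume "\<epsilon> > 0"
  then obtain \<delta> where "\<delta> > 0" "\<bar>a\<bar> * \<delta> + \<bar>b\<bar> * \<delta> \<le> \<epsilon>"
    using ex_lin_tolerance by blast
  moreover obtain s s' where "simple_approx A f \<delta> s" "simple_approx A g \<delta> s'"
    using assms \<open>\<delta> > 0\<close> unfolding Bfun_iff_simple_approx by blast
  ultimately show "\<exists>s. simple_approx A (\<lambda>\<omega>. a * f \<omega> + b * g \<omega>) \<epsilon> s"
    using simple_approx_lin simple_approx_mono by blast
qed

lemma Bfun_sum: "finite I \<Longrightarrow> \<forall>i\<in>I. f i \<in> Bfun A \<Longrightarrow> field_on A \<Longrightarrow>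
    (\<lambda>\<omega>. \<Sum>i\<in>I. c i * f i \<omega>) \<in> Bfun A"
  by (induction I rule: finite_induct) (auto simp: Bfun_const Bfun_lin[where b = 1, simplified])

lemma Bfun_bounded:
  assumes A: "field_on A" and f: "f \<in> Bfun A"
  shows "\<exists>M. \<forall>\<omega>. \<bar>f \<omega>\<bar> \<le> M"
proof -
  obtain s where s: "simple_approx A f 1 s"
    using f unfolding Bfun_iff_simple_approx by force
  then have "finite (abs ` range s)"
    using simple_fun_finite_range[OF A] unfolding simple_approx_def by simp
  then have "\<bar>f \<omega>\<bar> \<le> Max (abs ` range s) + 1" for \<omega>
    using s Max_ge[of "abs ` range s" "\<bar>s \<omega>\<bar>"] unfolding simple_approx_def
    by (smt (verit) rangeI image_eqI)
  then show ?thesis by blast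
qed

lemma simple_integral_approx_close:
  assumes A: "field_on A" and \<mu>: "nonneg_additive A \<mu>"
    and s: "simple_approx A f \<delta> s" and s': "simple_approx A f \<delta>' s'"
  shows "\<bar>simple_integral_ba \<mu> s - simple_integral_ba \<mu> s'\<bar> \<le> (\<delta> + \<delta>') * \<mu> UNIV"
proof -
  have simple: "simple_fun A s" "simple_fun A s'"
    using s s' unfolding simple_approx_def by auto
  have "\<bar>1 * s \<omega> + (-1) * s' \<omega>\<bar> \<le> \<delta> + \<delta>'" for \<omega>
  proof -
    have "\<bar>f \<omega> - s \<omega>\<bar> \<le> \<delta>" "\<bar>f \<omega> - s' \<omega>\<bar> \<le> \<delta>'"
      using s s' unfolding simple_approx_def by auto
    then show ?thesis by linarith
  qed
  then have "\<bar>simple_integral_ba \<mu> (\<lambda>\<omega>. 1 * s \<omega> + (-1) * s' \<omega>)\<bar> \<le> (\<delta> + \<delta>') * \<mu> UNIV"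
    by (intro simple_integral_abs_le[OF A \<mu> simple_fun_lin[OF simple]]) auto
  then show ?thesis
    using simple_integral_lin[OF A \<mu> simple, of 1 "-1"] by simp
qed

lemma le_of_le_add_pos_mult:
  fixes x y K :: real
  assumes "\<And>\<eta>. \<eta> > 0 \<Longrightarrow> x \<le> y + \<eta> * K"
  shows "x \<le> y"
proof (cases "K > 0")
  case True
  show ?thesis
  proof (rule field_le_epsilon)
    fix e :: real assume "e > 0"
    then show "x \<le> y + e" using assms[of "e / K"] True by simp
  qed
next
  case False
  then show ?thesis using assms[of 1] by simp
qed

lemma ex_limit_simple_integrals:
  assumes A: "field_on A" and \<mu>: "nonneg_additive A \<mu>" and f: "f \<in> Bfun A"
  shows "\<exists>L. \<forall>s \<delta>. simple_approx A f \<delta> s \<longrightarrow> \<bar>simple_integral_ba \<mu> s - L\<bar> \<le> \<delta> * \<mu> UNIV"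
proof -
  define lower where "lower = {simple_integral_ba \<mu> s - \<delta> * \<mu> UNIV | s \<delta>. simple_approx A f \<delta> s}"
  have below: "simple_integral_ba \<mu> s - \<delta> * \<mu> UNIV \<le> simple_integral_ba \<mu> s' + \<delta>' * \<mu> UNIV"
    if "simple_approx A f \<delta> s" "simple_approx A f \<delta>' s'" for s \<delta> s' \<delta>'
    using simple_integral_approx_close[OF A \<mu> that] by (simp add: algebra_simps abs_le_iff)
  obtain s0 where s0: "simple_approx A f 1 s0"
    using f unfolding Bfun_iff_simple_approx by force
  have "lower \<noteq> {}" and "bdd_above lower"
    unfolding lower_def bdd_above_def using s0 below[OF _ s0] by blast+
  have "\<bar>simple_integral_ba \<mu> s - Sup lower\<bar> \<le> \<delta> * \<mu> UNIV" if s: "simple_approx A f \<delta> s" for s \<delta>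
  proof -
    have "simple_integral_ba \<mu> s - \<delta> * \<mu> UNIV \<le> Sup lower"
      using s \<open>bdd_above lower\<close> by (intro cSup_upper) (auto simp: lower_def)
    moreover have "Sup lower \<le> simple_integral_ba \<mu> s + \<delta> * \<mu> UNIV"
      using below[OF _ s] \<open>lower \<noteq> {}\<close> by (intro cSup_least) (auto simp: lower_def)
    ultimately show ?thesis by linarith
  qed
  then show ?thesis by blast
qed

lemma integral_ba_eq_limit:
  assumes A: "field_on A" and \<mu>: "nonneg_additive A \<mu>" and f: "f \<in> Bfun A"
    and L: "\<forall>s \<delta>. simple_approx A f \<delta> s \<longrightarrow> \<bar>simple_integral_ba \<mu> s - L\<bar> \<le> \<delta> * \<mu> UNIV"
  shows "integral_ba A \<mu> f = L"
  unfolding integral_ba_iff_simple_approx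
proof (rule the_equality)
  have U: "\<mu> UNIV \<ge> 0"
    using \<mu> field_on_UNIV[OF A] by (simp add: nonneg_additive_def)
  have small: "\<epsilon> / (\<mu> UNIV + 1) * \<mu> UNIV < \<epsilon>" if "\<epsilon> > 0" for \<epsilon>
    using that U by (simp add: field_simps)
  show "\<forall>\<epsilon>>0. \<exists>\<delta>>0. \<forall>s. simple_approx A f \<delta> s \<longrightarrow> \<bar>simple_integral_ba \<mu> s - L\<bar> < \<epsilon>"
  proof (intro allI impI)
    fix \<epsilon> :: real assume "\<epsilon> > 0"
    have "\<bar>simple_integral_ba \<mu> s - L\<bar> < \<epsilon>" if "simple_approx A f (\<epsilon> / (\<mu> UNIV + 1)) s" for s
      using L that small[OF \<open>\<epsilon> > 0\<close>] by fastforce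
    moreover have "\<epsilon> / (\<mu> UNIV + 1) > 0" using \<open>\<epsilon> > 0\<close> U by simp
    ultimately show "\<exists>\<delta>>0. \<forall>s. simple_approx A f \<delta> s \<longrightarrow> \<bar>simple_integral_ba \<mu> s - L\<bar> < \<epsilon>"
      by blast
  qed
  fix r
  assume r: "\<forall>\<epsilon>>0. \<exists>\<delta>>0. \<forall>s. simple_approx A f \<delta> s \<longrightarrow> \<bar>simple_integral_ba \<mu> s - r\<bar> < \<epsilon>"
  have "\<bar>r - L\<bar> \<le> 0 + \<epsilon> * 2" if "\<epsilon> > 0" for \<epsilon>
  proof -
    obtain \<delta> where "\<delta> > 0" and \<delta>: "\<forall>s. simple_approx A f \<delta> s \<longrightarrow> \<bar>simple_integral_ba \<mu> s - r\<bar> < \<epsilon>"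
      using r \<open>\<epsilon> > 0\<close> by blast
    define \<delta>' where "\<delta>' = min \<delta> (\<epsilon> / (\<mu> UNIV + 1))"
    have "\<delta>' > 0" using \<open>\<delta> > 0\<close> \<open>\<epsilon> > 0\<close> U by (simp add: \<delta>'_def)
    then obtain s where s: "simple_approx A f \<delta>' s"
      using f unfolding Bfun_iff_simple_approx by blast
    then have "\<bar>simple_integral_ba \<mu> s - r\<bar> < \<epsilon>"
      using \<delta> simple_approx_mono[of A f \<delta>' s \<delta>] by (simp add: \<delta>'_def)
    moreover have "\<delta>' * \<mu> UNIV \<le> \<epsilon> / (\<mu> UNIV + 1) * \<mu> UNIV"
      using U by (intro mult_right_mono) (auto simp: \<delta>'_def)
    moreover have "\<bar>simple_integral_ba \<mu> s - L\<bar> \<le> \<delta>' * \<mu> UNIV"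
      using L s by blast
    ultimately show ?thesis using small[OF \<open>\<epsilon> > 0\<close>] by linarith
  qed
  then show "r = L" using le_of_le_add_pos_mult[of "\<bar>r - L\<bar>" 0 2] by simp
qed

lemma integral_ba_approx:
  assumes A: "field_on A" and \<mu>: "nonneg_additive A \<mu>" and f: "f \<in> Bfun A"
    and s: "simple_approx A f \<delta> s"
  shows "\<bar>simple_integral_ba \<mu> s - integral_ba A \<mu> f\<bar> \<le> \<delta> * \<mu> UNIV"
proof -
  obtain L where L: "\<forall>s \<delta>. simple_approx A f \<delta> s \<longrightarrow> \<bar>simple_integral_ba \<mu> s - L\<bar> \<le> \<delta> * \<mu> UNIV"
    using ex_limit_simple_integrals[OF A \<mu> f] by blast
  then show ?thesis using integral_ba_eq_limit[OF A \<mu> f L] s by simp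
qed

lemma integral_ba_eqI:
  assumes A: "field_on A" and \<mu>: "nonneg_additive A \<mu>" and f: "f \<in> Bfun A"
    and approx: "\<And>\<eta>. \<eta> > 0 \<Longrightarrow> \<exists>s. simple_approx A f \<eta> s \<and> \<bar>simple_integral_ba \<mu> s - r\<bar> \<le> \<eta> * K"
  shows "integral_ba A \<mu> f = r"
proof -
  have "\<bar>integral_ba A \<mu> f - r\<bar> \<le> 0 + \<eta> * (\<mu> UNIV + K)" if \<eta>: "\<eta> > 0" for \<eta>
  proof -
    obtain s where "simple_approx A f \<eta> s" "\<bar>simple_integral_ba \<mu> s - r\<bar> \<le> \<eta> * K"
      using approx[OF \<eta>] by blast
    moreover have "\<bar>simple_integral_ba \<mu> s - integral_ba A \<mu> f\<bar> \<le> \<eta> * \<mu> UNIV"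
      using integral_ba_approx[OF A \<mu> f] calculation(1) .
    ultimately show ?thesis by (simp add: distrib_left)
  qed
  then have "\<bar>integral_ba A \<mu> f - r\<bar> \<le> 0" by (rule le_of_le_add_pos_mult)
  then show ?thesis by simp
qed

lemma integral_ba_lin:
  assumes A: "field_on A" and \<mu>: "nonneg_additive A \<mu>" and f: "f \<in> Bfun A" and g: "g \<in> Bfun A"
  shows "integral_ba A \<mu> (\<lambda>\<omega>. a * f \<omega> + b * g \<omega>) = a * integral_ba A \<mu> f + b * integral_ba A \<mu> g"
proof (rule integral_ba_eqI[OF A \<mu> Bfun_lin[OF f g]])
  fix \<eta> :: real assume "\<eta> > 0"
  then obtain \<delta> where "\<delta> > 0" and \<delta>: "\<bar>a\<bar> * \<delta> + \<bar>b\<bar> * \<delta> \<le> \<eta>"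
    using ex_lin_tolerance by blast
  then obtain s s' where s: "simple_approx A f \<delta> s" and s': "simple_approx A g \<delta> s'"
    using f g unfolding Bfun_iff_simple_approx by blast
  have simple: "simple_fun A s" "simple_fun A s'"
    using s s' by (auto simp: simple_approx_def)
  have "\<bar>simple_integral_ba \<mu> (\<lambda>\<omega>. a * s \<omega> + b * s' \<omega>) - (a * integral_ba A \<mu> f + b * integral_ba A \<mu> g)\<bar>
      = \<bar>a * (simple_integral_ba \<mu> s - integral_ba A \<mu> f) + b * (simple_integral_ba \<mu> s' - integral_ba A \<mu> g)\<bar>"
    by (simp add: simple_integral_lin[OF A \<mu> simple] algebra_simps)
  also have "\<dots> \<le> \<bar>a\<bar> * (\<delta> * \<mu> UNIV) + \<bar>b\<bar> * (\<delta> * \<mu> UNIV)"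
    using integral_ba_approx[OF A \<mu> f s] integral_ba_approx[OF A \<mu> g s']
    by (intro order_trans[OF abs_triangle_ineq] add_mono) (auto simp: abs_mult intro: mult_left_mono)
  also have "\<dots> \<le> \<eta> * \<mu> UNIV"
    using \<delta> \<mu> field_on_UNIV[OF A] by (simp add: nonneg_additive_def mult_right_mono flip: distrib_right mult.assoc)
  finally show "\<exists>s. simple_approx A (\<lambda>\<omega>. a * f \<omega> + b * g \<omega>) \<eta> s \<and>
      \<bar>simple_integral_ba \<mu> s - (a * integral_ba A \<mu> f + b * integral_ba A \<mu> g)\<bar> \<le> \<eta> * \<mu> UNIV"
    using simple_approx_mono[OF simple_approx_lin[OF s s'] \<delta>] by blast
qed

lemma integral_ba_const:
  assumes A: "field_on A" and \<mu>: "nonneg_additive A \<mu>"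
  shows "integral_ba A \<mu> (\<lambda>\<omega>. c) = c * \<mu> UNIV"
  using integral_ba_approx[OF A \<mu> Bfun_const[OF A], where \<delta> = 0 and s = "\<lambda>\<omega>. c"] simple_fun_const[OF A]
  by (simp add: simple_approx_def simple_integral_const)

lemma integral_ba_sum:
  assumes A: "field_on A" and \<mu>: "nonneg_additive A \<mu>" and "finite I" and "\<forall>i\<in>I. f i \<in> Bfun A"
  shows "integral_ba A \<mu> (\<lambda>\<omega>. \<Sum>i\<in>I. c i * f i \<omega>) = (\<Sum>i\<in>I. c i * integral_ba A \<mu> (f i))"
  using assms(3,4)
proof (induction I rule: finite_induct)
  case empty
  then show ?case using integral_ba_const[OF A \<mu>, of 0] by simp
next
  case (insert j I)
  have "(\<lambda>\<omega>. \<Sum>i\<in>I. c i * f i \<omega>) \<in> Bfun A"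
    using Bfun_sum[OF insert.hyps(1) _ A] insert.prems by simp
  with insert show ?case
    using integral_ba_lin[OF A \<mu>, of "f j" _ "c j" 1] by simp
qed

lemma integral_ba_abs_le:
  assumes A: "field_on A" and \<mu>: "nonneg_additive A \<mu>" and f: "f \<in> Bfun A"
    and bound: "\<forall>\<omega>. \<bar>f \<omega>\<bar> \<le> M"
  shows "\<bar>integral_ba A \<mu> f\<bar> \<le> M * \<mu> UNIV"
proof (rule le_of_le_add_pos_mult)
  fix \<eta> :: real assume "\<eta> > 0"
  then obtain s where s: "simple_approx A f \<eta> s"
    using f unfolding Bfun_iff_simple_approx by blast
  have "\<bar>s \<omega>\<bar> \<le> M + \<eta>" for \<omega>
  proof -
    have "\<bar>f \<omega> - s \<omega>\<bar> \<le> \<eta>" "\<bar>f \<omega>\<bar> \<le> M"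
      using s bound unfolding simple_approx_def by auto
    then show ?thesis by linarith
  qed
  then have "\<bar>simple_integral_ba \<mu> s\<bar> \<le> (M + \<eta>) * \<mu> UNIV"
    using s simple_integral_abs_le[OF A \<mu>] unfolding simple_approx_def by blast
  then show "\<bar>integral_ba A \<mu> f\<bar> \<le> M * \<mu> UNIV + \<eta> * (2 * \<mu> UNIV)"
    using integral_ba_approx[OF A \<mu> f s] by (simp add: algebra_simps)
qed

lemma integral_ba_bounded_on_finite:
  assumes A: "field_on A" and G: "finite G" "G \<subseteq> Bfun A"
  shows "\<exists>C. \<forall>\<mu> g. pba A \<mu> \<longrightarrow> g \<in> G \<longrightarrow> \<bar>integral_ba A \<mu> g\<bar> \<le> C"
proof -
  obtain M where M: "\<forall>g\<in>G. \<forall>\<omega>. \<bar>g \<omega>\<bar> \<le> M g"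
    using Bfun_bounded[OF A] G(2) by (metis subsetD)
  have "\<bar>integral_ba A \<mu> g\<bar> \<le> (\<Sum>g\<in>G. \<bar>M g\<bar>)" if "pba A \<mu>" "g \<in> G" for \<mu> g
  proof -
    have "\<bar>integral_ba A \<mu> g\<bar> \<le> M g"
      using integral_ba_abs_le[OF A _ subsetD[OF G(2) \<open>g \<in> G\<close>], of \<mu> "M g"] M that
      by (simp add: pba_iff_nonneg_additive)
    also have "\<dots> \<le> (\<Sum>g\<in>G. \<bar>M g\<bar>)"
      using G(1) \<open>g \<in> G\<close> member_le_sum[of g G "\<lambda>g. \<bar>M g\<bar>"] by simp
    finally show ?thesis .
  qed
  then show ?thesis by blast
qed

lemma integral_ba_ext_on:
  assumes "field_on A"
  shows "integral_ba A (ext_on A \<mu>) = integral_ba A \<mu>"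
  unfolding integral_ba_iff_simple_approx simple_approx_def
  by (simp add: simple_integral_ext_on[OF assms] cong: conj_cong)

lemma integral_ba_measure_sum:
  assumes A: "field_on A" and Q: "\<forall>k<n. nonneg_additive A (Q k) \<and> l k \<ge> 0" and f: "f \<in> Bfun A"
  shows "integral_ba A (\<lambda>E. \<Sum>k<n. l k * Q k E) f = (\<Sum>k<(n::nat). l k * integral_ba A (Q k) f)"
proof (rule integral_ba_eqI[OF A nonneg_additive_sum[OF Q] f])
  fix \<eta> :: real assume "\<eta> > 0"
  then obtain s where s: "simple_approx A f \<eta> s"
    using f unfolding Bfun_iff_simple_approx by blast
  have "\<bar>(\<Sum>k<n. l k * simple_integral_ba (Q k) s) - (\<Sum>k<n. l k * integral_ba A (Q k) f)\<bar>
      = \<bar>\<Sum>k<n. l k * (simple_integral_ba (Q k) s - integral_ba A (Q k) f)\<bar>"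
    by (simp add: right_diff_distrib sum_subtractf)
  also have "\<dots> \<le> (\<Sum>k<n. \<bar>l k * (simple_integral_ba (Q k) s - integral_ba A (Q k) f)\<bar>)"
    by (rule sum_abs)
  also have "\<dots> = (\<Sum>k<n. l k * \<bar>simple_integral_ba (Q k) s - integral_ba A (Q k) f\<bar>)"
    using Q by (intro sum.cong) (auto simp: abs_mult)
  also have "\<dots> \<le> (\<Sum>k<n. l k * (\<eta> * Q k UNIV))"
    using Q integral_ba_approx[OF A _ f s] by (intro sum_mono mult_left_mono) auto
  finally show "\<exists>s. simple_approx A f \<eta> s \<and> \<bar>simple_integral_ba (\<lambda>E. \<Sum>k<n. l k * Q k E) s -
      (\<Sum>k<n. l k * integral_ba A (Q k) f)\<bar> \<le> \<eta> * (\<Sum>k<n. l k * Q k UNIV)"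
    using s by (auto simp: simple_integral_measure_sum sum_distrib_left algebra_simps)
qed

lemma integral_ba_measure_lin:
  assumes A: "field_on A" and "nonneg_additive A \<mu>" "nonneg_additive A \<nu>" "a \<ge> 0" "b \<ge> 0"
    and f: "f \<in> Bfun A"
  shows "integral_ba A (\<lambda>E. a * \<mu> E + b * \<nu> E) f = a * integral_ba A \<mu> f + b * integral_ba A \<nu> f"
  using integral_ba_measure_sum[OF A _ f, of 2 "\<lambda>k. if k = 0 then \<mu> else \<nu>" "\<lambda>k. if k = 0 then a else b"]
    assms by (simp add: numeral_2_eq_2 less_Suc_eq)

section \<open>Convex combinations of beliefs\<close>

lemma mem_conv_hull: "Q \<in> X \<Longrightarrow> Q \<in> conv_hull X"
  unfolding conv_hull_def
  by (intro CollectI exI[of _ 1] exI[of _ "\<lambda>_. 1"] exI[of _ "\<lambda>_. Q"]) auto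

lemma conv_hull_toward:
  assumes "\<nu> \<in> conv_hull X" "Q \<in> X" "0 \<le> u" "u \<le> 1"
  shows "(\<lambda>E. (1 - u) * \<nu> E + u * Q E) \<in> conv_hull X"
proof -
  obtain n :: nat and l R where "n \<ge> 1" and lR: "\<forall>k<n. l k \<ge> 0 \<and> R k \<in> X" and "(\<Sum>k<n. l k) = 1"
    and \<nu>: "\<nu> = (\<lambda>E. \<Sum>k<n. l k * R k E)"
    using assms(1) unfolding conv_hull_def by blast
  define l' where "l' k = (if k < n then (1 - u) * l k else u)" for k
  define R' where "R' k = (if k < n then R k else Q)" for k
  have "(\<Sum>k<Suc n. l' k) = 1"
    using \<open>(\<Sum>k<n. l k) = 1\<close> by (simp add: l'_def sum_distrib_left[symmetric])
  moreover have "\<forall>k<Suc n. l' k \<ge> 0 \<and> R' k \<in> X"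
    using lR assms(2-4) by (auto simp: l'_def R'_def less_Suc_eq)
  moreover have "(\<lambda>E. (1 - u) * \<nu> E + u * Q E) = (\<lambda>E. \<Sum>k<Suc n. l' k * R' k E)"
    unfolding \<nu> by (simp add: l'_def R'_def sum_distrib_left mult.assoc)
  ultimately show ?thesis
    unfolding conv_hull_def by (intro CollectI exI[of _ "Suc n"] exI[of _ l'] exI[of _ R']) auto
qed

lemma pba_conv_hull:
  assumes A: "field_on A" and X: "\<forall>Q\<in>X. pba A Q" and \<nu>: "\<nu> \<in> conv_hull X"
  shows "pba A \<nu>"
proof -
  obtain n :: nat and l R where lR: "\<forall>k<n. l k \<ge> 0 \<and> R k \<in> X" and "(\<Sum>k<n. l k) = 1"
    and \<nu>_eq: "\<nu> = (\<lambda>E. \<Sum>k<n. l k * R k E)"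
    using \<nu> unfolding conv_hull_def by blast
  then have "nonneg_additive A \<nu>"
    using X nonneg_additive_sum[of n A R l] by (simp add: pba_iff_nonneg_additive)
  moreover have "\<nu> UNIV = (\<Sum>k<n. l k)"
    using lR X unfolding \<nu>_eq by (intro sum.cong) (auto simp: pba_def)
  moreover note \<open>(\<Sum>k<n. l k) = 1\<close>
  ultimately show ?thesis by (simp add: pba_iff_nonneg_additive)
qed

lemma integral_ba_conv_hull_nonneg:
  assumes A: "field_on A" and X: "\<forall>Q\<in>X. nonneg_additive A Q \<and> 0 \<le> integral_ba A Q f"
    and f: "f \<in> Bfun A" and \<nu>: "\<nu> \<in> conv_hull X"
  shows "0 \<le> integral_ba A \<nu> f"
proof -
  obtain n :: nat and l R where lR: "\<forall>k<n. l k \<ge> 0 \<and> R k \<in> X" and \<nu>_eq: "\<nu> = (\<lambda>E. \<Sum>k<n. l k * R k E)"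
    using \<nu> unfolding conv_hull_def by blast
  then show ?thesis
    using X integral_ba_measure_sum[OF A _ f, of n R l] by (auto intro!: sum_nonneg)
qed

lemma conv_hull_integral_toward:
  assumes A: "field_on A" and X: "\<forall>Q\<in>X. pba A Q"
    and "\<nu> \<in> conv_hull X" "Q \<in> X" "0 \<le> u" "u \<le> 1"
  shows "\<exists>\<nu>'\<in>conv_hull X. \<forall>g\<in>Bfun A.
    integral_ba A \<nu>' g = (1 - u) * integral_ba A \<nu> g + u * integral_ba A Q g"
proof
  show "(\<lambda>E. (1 - u) * \<nu> E + u * Q E) \<in> conv_hull X"
    using conv_hull_toward assms(3-6) .
  have "nonneg_additive A \<nu>" "nonneg_additive A Q"
    using pba_conv_hull[OF A X assms(3)] X assms(4) by (auto simp: pba_iff_nonneg_additive)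
  then show "\<forall>g\<in>Bfun A. integral_ba A (\<lambda>E. (1 - u) * \<nu> E + u * Q E) g =
      (1 - u) * integral_ba A \<nu> g + u * integral_ba A Q g"
    using integral_ba_measure_lin[OF A] assms(5,6) by simp
qed

section \<open>Separation in finitely many coordinates\<close>

definition sq_dist :: "'g set \<Rightarrow> ('g \<Rightarrow> real) \<Rightarrow> ('g \<Rightarrow> real) \<Rightarrow> real" where
  "sq_dist G x y = (\<Sum>g\<in>G. (x g - y g)\<^sup>2)"

lemma sq_dist_nonneg: "0 \<le> sq_dist G x y"
  unfolding sq_dist_def by (simp add: sum_nonneg)

lemma sq_dist_ge_coord:
  assumes "finite G" "g \<in> G" "0 \<le> \<epsilon>" "\<epsilon> \<le> \<bar>x g - y g\<bar>"
  shows "\<epsilon>\<^sup>2 \<le> sq_dist G x y"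
proof -
  have "\<epsilon>\<^sup>2 \<le> (x g - y g)\<^sup>2"
    using assms(3,4) by (metis abs_le_square_iff abs_of_nonneg)
  also have "\<dots> \<le> sq_dist G x y"
    unfolding sq_dist_def using assms(1,2) by (intro member_le_sum) auto
  finally show ?thesis .
qed

lemma sq_dist_le_card:
  assumes "\<And>g. g \<in> G \<Longrightarrow> \<bar>x g\<bar> \<le> C \<and> \<bar>y g\<bar> \<le> C"
  shows "sq_dist G x y \<le> real (card G) * (2 * C)\<^sup>2"
proof -
  have "(x g - y g)\<^sup>2 \<le> (2 * C)\<^sup>2" if "g \<in> G" for g
    using assms[OF that] by (intro abs_le_square_iff[THEN iffD1]) auto
  then show ?thesis unfolding sq_dist_def by (rule sum_bounded_above)
qed

lemma sq_dist_toward: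
  "sq_dist G z (\<lambda>g. (1 - u) * y g + u * v g) =
    sq_dist G z y - 2 * u * (\<Sum>g\<in>G. (z g - y g) * (v g - y g)) + u\<^sup>2 * sq_dist G v y"
proof -
  have "(z g - ((1 - u) * y g + u * v g))\<^sup>2 =
      (z g - y g)\<^sup>2 - 2 * u * ((z g - y g) * (v g - y g)) + u\<^sup>2 * (v g - y g)\<^sup>2" for g
    by (simp add: power2_eq_square algebra_simps)
  then show ?thesis
    unfolding sq_dist_def by (simp add: sum.distrib sum_subtractf sum_distrib_left)
qed

lemma inner_lt_if_near_minimizer:
  assumes near: "sq_dist G z y < sq_dist G z (\<lambda>g. (1 - u) * y g + u * v g) + u * \<eta>"
    and "sq_dist G v y \<le> D" "0 < u" "u * D \<le> \<eta>"
  shows "(\<Sum>g\<in>G. (z g - y g) * (v g - y g)) < \<eta>"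
proof -
  have "u\<^sup>2 * sq_dist G v y \<le> u * (u * D)"
    using assms(2,3) by (simp add: power2_eq_square mult_left_mono)
  also have "\<dots> \<le> u * \<eta>"
    using assms(3,4) by (simp add: mult_left_mono)
  finally have "u * (2 * (\<Sum>g\<in>G. (z g - y g) * (v g - y g))) < u * (2 * \<eta>)"
    using near unfolding sq_dist_toward by (simp add: algebra_simps)
  then show ?thesis
    using \<open>0 < u\<close> by simp
qed

text \<open>The separating functional is the direction from z to a point y of K that is nearest
  only up to an error smaller than what any step from y towards V could gain; so no compactness
  of K is needed.\<close>
lemma ex_separating_functional:
  fixes K V :: "('g \<Rightarrow> real) set" and z :: "'g \<Rightarrow> real"
  assumes "finite G" and "V \<subseteq> K" and "V \<noteq> {}"
    and toward: "\<And>x v u. x \<in> K \<Longrightarrow> v \<in> V \<Longrightarrow> 0 \<le> u \<Longrightarrow> u \<le> 1 \<Longrightarrow> (\<lambda>g. (1 - u) * x g + u * v g) \<in> K"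
    and bounded: "\<And>x g. x \<in> K \<Longrightarrow> g \<in> G \<Longrightarrow> \<bar>x g\<bar> \<le> C"
    and far: "\<And>x. x \<in> K \<Longrightarrow> \<exists>g\<in>G. \<epsilon> \<le> \<bar>z g - x g\<bar>" and "\<epsilon> > 0"
  shows "\<exists>a b. (\<Sum>g\<in>G. a g * z g) < b \<and> (\<forall>v\<in>V. b \<le> (\<Sum>g\<in>G. a g * v g))"
proof -
  define D where "D = real (card G) * (2 * C)\<^sup>2"
  define \<eta> where "\<eta> = \<epsilon>\<^sup>2 / 2"
  define u where "u = min 1 (\<eta> / (D + 1))"
  have "D \<ge> 0" "\<eta> > 0" using \<open>\<epsilon> > 0\<close> by (simp_all add: D_def \<eta>_def)
  then have u: "0 < u" "u \<le> 1" "u * D \<le> \<eta>"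
    using mult_mono[of u "\<eta> / (D + 1)" D "D + 1"] by (auto simp: u_def)
  have "sq_dist G z ` K \<noteq> {}"
    using \<open>V \<subseteq> K\<close> \<open>V \<noteq> {}\<close> by blast
  moreover have bdd: "bdd_below (sq_dist G z ` K)"
    by (rule bdd_belowI[of _ 0]) (auto simp: sq_dist_nonneg)
  moreover have "Inf (sq_dist G z ` K) < Inf (sq_dist G z ` K) + u * \<eta>"
    using u \<open>\<eta> > 0\<close> by simp
  ultimately obtain y where "y \<in> K" and y: "sq_dist G z y < Inf (sq_dist G z ` K) + u * \<eta>"
    using cInf_lessD[of "sq_dist G z ` K"] by blast
  define a where "a g = y g - z g" for g
  define b where "b = (\<Sum>g\<in>G. a g * y g) - \<eta>"
  have "(\<Sum>g\<in>G. a g * y g) - (\<Sum>g\<in>G. a g * z g) = sq_dist G z y"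
    unfolding sq_dist_def a_def by (simp flip: sum_subtractf add: power2_eq_square algebra_simps)
  moreover have "\<epsilon>\<^sup>2 \<le> sq_dist G z y"
    using far[OF \<open>y \<in> K\<close>] \<open>finite G\<close> \<open>\<epsilon> > 0\<close> sq_dist_ge_coord by fastforce
  ultimately have "(\<Sum>g\<in>G. a g * z g) < b"
    using \<open>\<eta> > 0\<close> unfolding b_def \<eta>_def by linarith
  moreover have "b \<le> (\<Sum>g\<in>G. a g * v g)" if v: "v \<in> V" for v
  proof -
    have "Inf (sq_dist G z ` K) \<le> sq_dist G z (\<lambda>g. (1 - u) * y g + u * v g)"
      using toward[OF \<open>y \<in> K\<close> v] u bdd by (auto intro: cInf_lower)
    moreover have "sq_dist G v y \<le> D"
      unfolding D_def using bounded \<open>y \<in> K\<close> v \<open>V \<subseteq> K\<close> by (intro sq_dist_le_card) auto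
    ultimately have "(\<Sum>g\<in>G. (z g - y g) * (v g - y g)) < \<eta>"
      using y u by (intro inner_lt_if_near_minimizer) auto
    moreover have "(\<Sum>g\<in>G. a g * v g) - (\<Sum>g\<in>G. a g * y g) = - (\<Sum>g\<in>G. (z g - y g) * (v g - y g))"
      unfolding a_def by (simp flip: sum_subtractf sum_negf add: algebra_simps)
    ultimately show ?thesis unfolding b_def by linarith
  qed
  ultimately show ?thesis by blast
qed

section \<open>Bets against beliefs outside the closed hull of the types\<close>

lemma integral_ba_nonneg_if_mem_Pi_set:
  assumes A: "field_on A" and t: "\<forall>\<omega>. pba A (t i \<omega>)" and f: "f \<in> Bfun A"
    and nonneg: "\<forall>\<omega>. 0 \<le> integral_ba A (t i \<omega>) f" and P: "P \<in> Pi_set A t i"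
  shows "0 \<le> integral_ba A P f"
proof (rule ccontr)
  assume "\<not> 0 \<le> integral_ba A P f"
  then obtain \<nu> where \<nu>: "\<nu> \<in> conv_hull {ext_on A (t i \<omega>) | \<omega>. True}"
    and close: "\<bar>integral_ba A P f - integral_ba A \<nu> f\<bar> < - integral_ba A P f"
    using P f unfolding Pi_set_def wstar_closure_def
    by (auto dest!: spec[of _ "{f}"] spec[of _ "- integral_ba A P f"])
  have "0 \<le> integral_ba A \<nu> f"
    using t nonneg pba_imp_nonneg_additive[THEN nonneg_additive_ext_on[OF A]]
    by (intro integral_ba_conv_hull_nonneg[OF A _ f \<nu>]) (auto simp: integral_ba_ext_on[OF A])
  with close show False by linarith
qed

lemma ex_functional_separating_from_conv_hull:
  assumes A: "field_on A" and X: "\<forall>Q\<in>X. pba A Q" "X \<noteq> {}"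
    and G: "finite G" "G \<subseteq> Bfun A" and "\<epsilon> > 0"
    and far_X: "\<forall>\<nu>\<in>conv_hull X. \<exists>g\<in>G. \<epsilon> \<le> \<bar>z g - integral_ba A \<nu> g\<bar>"
  shows "\<exists>a b. (\<Sum>g\<in>G. a g * z g) < b \<and> (\<forall>Q\<in>X. b \<le> (\<Sum>g\<in>G. a g * integral_ba A Q g))"
proof -
  define K where "K = {x. \<exists>\<nu>\<in>conv_hull X. \<forall>g\<in>G. x g = integral_ba A \<nu> g}"
  define V where "V = integral_ba A ` X"
  have V_K: "V \<subseteq> K"
    using mem_conv_hull unfolding V_def K_def by blast
  have V_ne: "V \<noteq> {}"
    using X(2) by (simp add: V_def)
  have toward: "(\<lambda>g. (1 - u) * x g + u * v g) \<in> K"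
    if x: "x \<in> K" and v: "v \<in> V" and "0 \<le> u" "u \<le> 1" for x v u
  proof -
    obtain \<nu> Q where \<nu>: "\<nu> \<in> conv_hull X" and x_eq: "\<forall>g\<in>G. x g = integral_ba A \<nu> g"
      and "Q \<in> X" and v_eq: "v = integral_ba A Q"
      using x v by (auto simp: K_def V_def)
    from conv_hull_integral_toward[OF A X(1) \<nu> \<open>Q \<in> X\<close> \<open>0 \<le> u\<close> \<open>u \<le> 1\<close>]
    obtain \<nu>' where "\<nu>' \<in> conv_hull X"
      and \<nu>': "\<forall>g\<in>Bfun A. integral_ba A \<nu>' g = (1 - u) * integral_ba A \<nu> g + u * integral_ba A Q g"
      by blast
    moreover have "\<forall>g\<in>G. (1 - u) * x g + u * v g = integral_ba A \<nu>' g"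
      using \<nu>' x_eq v_eq G(2) by auto
    ultimately show ?thesis
      unfolding K_def by blast
  qed
  obtain C where C: "\<forall>\<mu> g. pba A \<mu> \<longrightarrow> g \<in> G \<longrightarrow> \<bar>integral_ba A \<mu> g\<bar> \<le> C"
    using integral_ba_bounded_on_finite[OF A G] by blast
  have bounded: "\<bar>x g\<bar> \<le> C" if x: "x \<in> K" and "g \<in> G" for x g
  proof -
    obtain \<nu> where "\<nu> \<in> conv_hull X" "x g = integral_ba A \<nu> g"
      using x \<open>g \<in> G\<close> by (auto simp: K_def)
    then show ?thesis
      using C pba_conv_hull[OF A X(1)] \<open>g \<in> G\<close> by simp
  qed
  have far: "\<exists>g\<in>G. \<epsilon> \<le> \<bar>z g - x g\<bar>" if "x \<in> K" for x
    using far_X that by (auto simp: K_def)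
  have "\<exists>a b. (\<Sum>g\<in>G. a g * z g) < b \<and> (\<forall>v\<in>V. b \<le> (\<Sum>g\<in>G. a g * v g))"
    by (rule ex_separating_functional[OF G(1) V_K V_ne]) (fact toward bounded far \<open>\<epsilon> > 0\<close>)+
  then show ?thesis
    by (auto simp: V_def)
qed

text \<open>Weak* neighbourhoods are given by finitely many integrals, so a belief outside Pi_i is
  already kept away from the convex hull of the types by finitely many test functions.\<close>
lemma ex_functional_separating_from_Pi_set:
  assumes A: "field_on A" and t: "\<forall>\<omega>. pba A (t i \<omega>)" and P: "pba A P"
    and notin: "ext_on A P \<notin> Pi_set A t i"
  shows "\<exists>G a b. finite G \<and> G \<subseteq> Bfun A \<and> (\<Sum>g\<in>G. a g * integral_ba A P g) < b \<and>
    (\<forall>\<omega>. b \<le> (\<Sum>g\<in>G. a g * integral_ba A (t i \<omega>) g))"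
proof -
  define X where "X = {ext_on A (t i \<omega>) | \<omega>. True}"
  obtain G \<epsilon> where G: "finite G" "G \<subseteq> Bfun A" and "\<epsilon> > 0"
    and far: "\<forall>\<nu>\<in>conv_hull X. \<exists>g\<in>G. \<epsilon> \<le> \<bar>integral_ba A P g - integral_ba A \<nu> g\<bar>"
    using notin ba_ext_on[OF A P]
    unfolding Pi_set_def wstar_closure_def X_def by (auto simp: not_less integral_ba_ext_on[OF A])
  have "\<forall>Q\<in>X. pba A Q" "X \<noteq> {}"
    using t pba_ext_on[OF A] by (auto simp: X_def)
  from ex_functional_separating_from_conv_hull[OF A this G \<open>\<epsilon> > 0\<close> far]
  obtain a b where "(\<Sum>g\<in>G. a g * integral_ba A P g) < b"
    and above: "\<forall>Q\<in>X. b \<le> (\<Sum>g\<in>G. a g * integral_ba A Q g)"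
    by blast
  moreover have "b \<le> (\<Sum>g\<in>G. a g * integral_ba A (t i \<omega>) g)" for \<omega>
    using above[rule_format, of "ext_on A (t i \<omega>)"] by (auto simp: X_def integral_ba_ext_on[OF A])
  ultimately show ?thesis
    using G by blast
qed

lemma ex_bet_if_not_mem_Pi_set:
  assumes A: "field_on A" and t: "\<forall>\<omega>. pba A (t i \<omega>)" and P: "pba A P"
    and notin: "ext_on A P \<notin> Pi_set A t i"
  shows "\<exists>F\<in>Bfun A. (\<forall>\<omega>. 0 \<le> integral_ba A (t i \<omega>) F) \<and> integral_ba A P F < 0"
proof -
  obtain G a b where G: "finite G" "G \<subseteq> Bfun A"
    and P_below: "(\<Sum>g\<in>G. a g * integral_ba A P g) < b"
    and t_above: "\<forall>\<omega>. b \<le> (\<Sum>g\<in>G. a g * integral_ba A (t i \<omega>) g)"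
    using ex_functional_separating_from_Pi_set[OF A t P notin] by blast
  define F where "F \<omega> = (\<Sum>g\<in>G. a g * g \<omega>) - b" for \<omega>
  have sum_G: "(\<lambda>\<omega>. \<Sum>g\<in>G. a g * g \<omega>) \<in> Bfun A"
    using Bfun_sum[OF G(1) _ A, of id] G(2) by auto
  have "(\<lambda>\<omega>. 1 * (\<Sum>g\<in>G. a g * g \<omega>) + (- b) * 1) \<in> Bfun A"
    by (rule Bfun_lin[OF sum_G Bfun_const[OF A, of 1]])
  then have F: "F \<in> Bfun A"
    by (simp add: F_def[abs_def])
  have integral_F: "integral_ba A \<mu> F = (\<Sum>g\<in>G. a g * integral_ba A \<mu> g) - b" if "pba A \<mu>" for \<mu>
    using that integral_ba_lin[OF A _ sum_G Bfun_const[OF A, of 1], of \<mu> 1 "-b"]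
      integral_ba_sum[OF A _ G(1), of \<mu> id a] integral_ba_const[OF A, of \<mu> 1] G(2)
    by (auto simp: F_def[abs_def] pba_iff_nonneg_additive)
  show ?thesis
    using F integral_F t P t_above P_below by (intro bexI[of _ F]) auto
qed

lemma semi_bet_integral_nonneg:
  assumes "semi_bet A t I f" "i \<in> I"
  shows "0 \<le> integral_ba A (t i \<omega>) (f i)"
  using assms unfolding semi_bet_def commonly_certain_def by blast

lemma semi_bet_single_player:
  assumes A: "field_on A" and t: "\<forall>j\<in>I. \<forall>\<omega>. pba A (t j \<omega>)" and "finite I"
    and F: "F \<in> Bfun A" and F_nonneg: "\<forall>\<omega>. 0 \<le> integral_ba A (t i \<omega>) F"
  shows "semi_bet A t I (\<lambda>j \<omega>. if j = i then F \<omega> else 0)"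
proof -
  have "cc_component A t I UNIV"
    using field_on_UNIV[OF A] t unfolding cc_component_def pba_def by blast
  moreover have "0 \<le> integral_ba A (t j \<omega>) (\<lambda>\<omega>. if j = i then F \<omega> else 0)" if "j \<in> I" for j \<omega>
    using F_nonneg integral_ba_const[OF A pba_imp_nonneg_additive, of "t j \<omega>" 0] t that
    by (cases "j = i") (auto simp: eta_contract_eq)
  moreover have "(\<lambda>\<omega>. if j = i then F \<omega> else 0) \<in> Bfun A" for j
    using F Bfun_const[OF A] by (cases "j = i") auto
  ultimately show ?thesis
    using \<open>finite I\<close> unfolding semi_bet_def commonly_certain_def by auto
qed

lemma universally_consistent_imp_no_money_pump:
  assumes T: "type_space N A M t" and UC: "universally_consistent N A M t"
  shows "\<not> universal_money_pump N A M t"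
proof
  assume "universal_money_pump N A M t"
  then obtain I S where I: "finite I" "I \<subseteq> N" and S: "cc_component A t I S"
    and pump: "\<forall>P. pba A P \<and> outer_inf P A S > 0 \<longrightarrow>
      (\<exists>f. semi_bet A t I f \<and> integral_ba A P (\<lambda>\<omega>. \<Sum>i\<in>I. f i \<omega>) < 0)"
    unfolding universal_money_pump_def by blast
  obtain P where P: "pba A P" "\<forall>i\<in>I. P \<in> Pi_set A t i" "outer_inf P A S > 0"
    using UC I S unfolding universally_consistent_def by blast
  obtain f where f: "semi_bet A t I f" and loss: "integral_ba A P (\<lambda>\<omega>. \<Sum>i\<in>I. f i \<omega>) < 0"
    using pump P by blast
  have A: "field_on A" and f_Bfun: "\<forall>i\<in>I. f i \<in> Bfun A"
    using type_space_field_on[OF T] f unfolding semi_bet_def by auto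
  have "0 \<le> integral_ba A P (f i)" if "i \<in> I" for i
    using type_space_pba[OF T] I(2) that f_Bfun semi_bet_integral_nonneg[OF f that] P(2)
    by (intro integral_ba_nonneg_if_mem_Pi_set[OF A]) auto
  then have "0 \<le> integral_ba A P (\<lambda>\<omega>. \<Sum>i\<in>I. f i \<omega>)"
    using integral_ba_sum[OF A pba_imp_nonneg_additive[OF P(1)] I(1) f_Bfun, of "\<lambda>_. 1"]
    by (simp add: sum_nonneg)
  with loss show False by simp
qed

lemma money_pump_if_not_universally_consistent:
  assumes T: "type_space N A M t" and not_UC: "\<not> universally_consistent N A M t"
  shows "universal_money_pump N A M t"
proof -
  have A: "field_on A" using type_space_field_on[OF T] .
  obtain I S where I: "finite I" "I \<subseteq> N" and S: "cc_component A t I S"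
    and no_prior: "\<forall>P. pba A P \<and> (\<forall>i\<in>I. P \<in> Pi_set A t i) \<longrightarrow> \<not> outer_inf P A S > 0"
    using not_UC unfolding universally_consistent_def by blast
  have "\<exists>f. semi_bet A t I f \<and> integral_ba A P (\<lambda>\<omega>. \<Sum>j\<in>I. f j \<omega>) < 0"
    if P: "pba A P" "outer_inf P A S > 0" for P
  proof -
    have "pba A (ext_on A P)" and "outer_inf (ext_on A P) A S > 0"
      using pba_ext_on[OF A P(1)] P(2) by (simp_all add: outer_inf_ext_on)
    then obtain i where "i \<in> I" and notin: "ext_on A P \<notin> Pi_set A t i"
      using no_prior by blast
    have "\<forall>\<omega>. pba A (t i \<omega>)"
      using type_space_pba[OF T] I(2) \<open>i \<in> I\<close> by blast
    then obtain F where F: "F \<in> Bfun A" "\<forall>\<omega>. 0 \<le> integral_ba A (t i \<omega>) F" "integral_ba A P F < 0"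
      using ex_bet_if_not_mem_Pi_set[OF A _ P(1) notin] by blast
    define f where "f j \<omega> = (if j = i then F \<omega> else 0)" for j \<omega>
    have "(\<lambda>\<omega>. \<Sum>j\<in>I. f j \<omega>) = F"
      using I(1) \<open>i \<in> I\<close> by (simp add: f_def)
    moreover have "semi_bet A t I f"
      unfolding f_def[abs_def] using type_space_pba[OF T] I F
      by (intro semi_bet_single_player[OF A]) auto
    ultimately show ?thesis using F(3) by auto
  qed
  then show ?thesis
    unfolding universal_money_pump_def using I S by blast
qed

theorem theorem5:
  fixes N :: "'i set" and A :: "'w set set" and M :: "'i \<Rightarrow> 'w set set"
    and t :: "'i \<Rightarrow> 'w \<Rightarrow> 'w set \<Rightarrow> real"
  assumes "type_space N A M t"
  shows "(universally_consistent N A M t \<and> \<not> universal_money_pump N A M t) \<or>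
         (\<not> universally_consistent N A M t \<and> universal_money_pump N A M t)"
  using universally_consistent_imp_no_money_pump[OF assms]
    money_pump_if_not_universally_consistent[OF assms] by blast

end
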